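(* Let $n\ge2$, $\kappa>0$, and let $\tilde\theta:\mathbb R\to[0,\infty)$ be locally Lipschitz and nondecreasing with $\tilde\theta(s)=0$ for $s\le 0$ and $\tilde\theta(s)>0$ for $s>0$; set $\theta(a,b)=\tilde\theta(\min(a,b))$. Let $1\le m<n$ and let $\rho:[0,\infty)\to\mathbb R^n$ be the solution of $$\frac{d\rho_j}{dt}=\kappa\sum_{k=1}^n\theta(\rho_j,\rho_k)(\rho_j-\rho_k),\qquad j=1,\dots,n,$$ with $\rho(0)\in\mathcal P$ satisfying $\rho_1(0)=\dots=\rho_m(0)>\rho_{m+1}(0)\ge\dots\ge\rho_n(0)$. Then $\rho_1(t)=\rho_2(t)=\dots=\rho_m(t)$ for all $t\ge0$, and $$\rho_1(t)-\max_{m<j\le n}\rho_j(t)\ \ge\ \rho_1(0)-\max_{m<j\le n}\rho_j(0)\qquad\forall t\ge0.$$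
   Context: $\mathcal P=\{\rho\in\mathbb R^n:\rho_i\ge0\ \forall i,\ \sum_{i=1}^n\rho_i=1\}$ denotes the probability simplex. *)

theory Defs
  imports "HOL-Analysis.Analysis"
begin

end

theory Submission
  imports Defs
begin

text \<open>
  Since \<open>\<theta>\<close> is locally Lipschitz, the difference of two
  coordinates satisfies \<open>|d'| \<le> K |d|\<close> on every compact time interval, so coordinates that start
  equal stay equal (Gronwall). For the gap, look at the leading coordinate \<open>\<rho>\<^sub>1\<close> and a largest
  coordinate \<open>\<rho>\<^sub>j\<close> of the lower group: every other coordinate either equals \<open>\<rho>\<^sub>1\<close> or lies below
  \<open>\<rho>\<^sub>j\<close>, and comparing the sums term by term (\<open>\<theta>\<close> is nonnegative) shows that the derivative of
  \<open>\<rho>\<^sub>1 - \<rho>\<^sub>j\<close> is nonnegative whenever this difference is positive. A first-contact argument with a slightly tilted barrier turns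
  this into the lower bound on the gap.
\<close>

lemma lipschitz_on_compact_if_locally_lipschitz:
  fixes f :: "'a::metric_space \<Rightarrow> 'b::metric_space"
  assumes loc: "\<forall>x. \<exists>\<delta>>0. \<exists>L. L-lipschitz_on (cball x \<delta>) f" and K: "compact K"
  obtains L where "L-lipschitz_on K f"
proof -
  have "local_lipschitz {0::real} K (\<lambda>_. f)"
    unfolding local_lipschitz_def using loc by (meson Int_lower1 lipschitz_on_subset)
  then show ?thesis
    using local_lipschitz_compact_implies_lipschitz[OF _ K, of "{0::real}"] that by auto
qed

lemma continuous_family_bounded:
  fixes f :: "'i \<Rightarrow> 'a::topological_space \<Rightarrow> real"
  assumes J: "finite J" and K: "compact K" and cont: "\<And>j. j \<in> J \<Longrightarrow> continuous_on K (f j)"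
  obtains R where "\<And>j s. j \<in> J \<Longrightarrow> s \<in> K \<Longrightarrow> \<bar>f j s\<bar> \<le> R"
proof -
  define F where "F s = (\<Sum>j\<in>J. \<bar>f j s\<bar>)" for s
  have "continuous_on K F"
    unfolding F_def by (intro continuous_on_sum continuous_on_rabs cont)
  then obtain R where R: "\<forall>y\<in>F ` K. norm y \<le> R"
    using K compact_continuous_image compact_imp_bounded bounded_iff by metis
  have "\<bar>f j s\<bar> \<le> R" if "j \<in> J" "s \<in> K" for j s
  proof -
    have "\<bar>f j s\<bar> \<le> F s" unfolding F_def using J that(1) by (intro member_le_sum) auto
    also have "\<dots> \<le> R" using R that(2) by fastforce
    finally show ?thesis .
  qed
  then show ?thesis by (rule that)
qed

lemma descending_le_first:
  fixes x :: "nat \<Rightarrow> real"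
  assumes desc: "\<forall>j. m < j \<and> j < n \<longrightarrow> x (j+1) \<le> x j" and "m < j" "j \<le> n"
  shows "x j \<le> x (m+1)"
  using assms(2,3)
proof (induction j)
  case (Suc j)
  then show ?case using desc by (cases "m < j") (auto simp: less_Suc_eq)
qed simp

lemma first_exit_time:
  fixes u :: "'i \<Rightarrow> real \<Rightarrow> real"
  assumes J: "finite J" and cont: "\<And>j. j \<in> J \<Longrightarrow> continuous_on {0..t0} (u j)"
    and pos0: "\<And>j. j \<in> J \<Longrightarrow> 0 < u j 0" and "0 \<le> t0" "j \<in> J" "u j t0 \<le> 0"
  obtains T where "0 < T" "T \<le> t0" "\<exists>k\<in>J. u k T \<le> 0"
    "\<And>s k. 0 \<le> s \<Longrightarrow> s < T \<Longrightarrow> k \<in> J \<Longrightarrow> 0 < u k s"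
    "\<And>k. k \<in> J \<Longrightarrow> 0 \<le> u k T"
proof -
  define S where "S = (\<Union>k\<in>J. {t \<in> {0..t0}. u k t \<le> 0})"
  have "closed S"
    unfolding S_def using J cont
    by (intro closed_UN ballI continuous_on_closed_Collect_le continuous_on_const) auto
  moreover have "t0 \<in> S" using assms(4-6) by (auto simp: S_def)
  moreover have "bdd_below S" by (auto simp: S_def bdd_below_def)
  ultimately have TS: "Inf S \<in> S" using closed_contains_Inf by blast
  define T where "T = Inf S"
  have "0 \<notin> S" using pos0 by (fastforce simp: S_def)
  then have "0 < T" "T \<le> t0" using TS by (auto simp: S_def T_def order_le_less)
  have below: "0 < u k s" if "0 \<le> s" "s < T" "k \<in> J" for s k
  proof (rule ccontr)
    assume "\<not> 0 < u k s"
    then have "s \<in> S" using that \<open>T \<le> t0\<close> by (auto simp: S_def not_less)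
    then have "T \<le> s" unfolding T_def using \<open>bdd_below S\<close> by (rule cInf_lower)
    then show False using that by simp
  qed
  have above: "0 \<le> u k T" if "k \<in> J" for k
  proof -
    have "closed {s \<in> {0..T}. 0 \<le> u k s}"
      using cont[OF that] \<open>T \<le> t0\<close>
      by (intro continuous_on_closed_Collect_le continuous_on_const)
        (auto elim: continuous_on_subset)
    moreover have "{0..<T} \<subseteq> {s \<in> {0..T}. 0 \<le> u k s}"
      using below that by (auto intro: less_imp_le)
    ultimately have "closure {0..<T} \<subseteq> {s \<in> {0..T}. 0 \<le> u k s}"
      by (rule closure_minimal[rotated])
    then have "T \<in> {s \<in> {0..T}. 0 \<le> u k s}"
      using \<open>0 < T\<close> closure_atLeastLessThan[of 0 T] by (metis atLeastAtMost_iff order.refl less_imp_le subsetD)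
    then show ?thesis by simp
  qed
  have "\<exists>k\<in>J. u k T \<le> 0" using TS by (auto simp: S_def T_def)
  with \<open>0 < T\<close> \<open>T \<le> t0\<close> show ?thesis using below above by (rule that)
qed

lemma tilted_lower_bound:
  fixes g g' :: "'i \<Rightarrow> real \<Rightarrow> real"
  assumes J: "finite J"
    and der: "\<And>j t. j \<in> J \<Longrightarrow> 0 \<le> t \<Longrightarrow> (g j has_real_derivative g' j t) (at t within {0..})"
    and active: "\<And>j t. j \<in> J \<Longrightarrow> 0 \<le> t \<Longrightarrow> 0 < g j t \<Longrightarrow> (\<forall>k\<in>J. g j t \<le> g k t) \<Longrightarrow> 0 \<le> g' j t"
    and init: "\<And>j. j \<in> J \<Longrightarrow> c \<le> g j 0"
    and j: "j \<in> J" and t0: "0 \<le> t0" and \<epsilon>: "0 < \<epsilon>" "\<epsilon> * (1 + t0) < c"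
  shows "c - \<epsilon> * (1 + t0) < g j t0"
proof (rule ccontr)
  assume contact: "\<not> ?thesis"
  \<comment> \<open>The tilt \<open>\<epsilon> * (1 + s)\<close> turns the nonnegative derivative at the first contact into a positive one.\<close>
  define u where "u k s = g k s - c + \<epsilon> * (1 + s)" for k s
  have cont: "continuous_on {0..t0} (u k)" if "k \<in> J" for k
    unfolding u_def
    by (intro continuous_intros DERIV_continuous_on[of "{0..t0}" "g k" "g' k"]
        has_field_derivative_subset[OF der[OF that]]) auto
  have pos0: "0 < u k 0" if "k \<in> J" for k using init[OF that] \<epsilon>(1) by (simp add: u_def)
  have "u j t0 \<le> 0" using contact by (simp add: u_def)
  obtain T where T: "0 < T" "T \<le> t0" "\<exists>k\<in>J. u k T \<le> 0"
      and below: "\<And>s k. 0 \<le> s \<Longrightarrow> s < T \<Longrightarrow> k \<in> J \<Longrightarrow> 0 < u k s"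
      and above: "\<And>k. k \<in> J \<Longrightarrow> 0 \<le> u k T"
    using first_exit_time[where u = u, OF J cont pos0 t0 j \<open>u j t0 \<le> 0\<close>] by metis
  define j0 where "j0 = arg_min_on (\<lambda>k. g k T) J"
  have j0: "j0 \<in> J" "\<forall>k\<in>J. g j0 T \<le> g k T"
    using arg_min_if_finite[OF J, of "\<lambda>k. g k T"] j by (auto simp: j0_def not_less)
  have "u j0 T \<le> 0" using T(3) j0 by (auto simp: u_def)
  have "0 < g j0 T"
  proof -
    have "\<epsilon> * (1 + T) \<le> \<epsilon> * (1 + t0)" using \<epsilon>(1) T(2) by simp
    then show ?thesis using above[OF j0(1)] \<epsilon>(2) by (simp add: u_def)
  qed
  then have "0 < g' j0 T + \<epsilon>" using active[OF j0(1) _ _ j0(2)] T(1) \<epsilon>(1) by force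
  moreover have "(u j0 has_real_derivative g' j0 T + \<epsilon>) (at T within {0..})"
    unfolding u_def using der[OF j0(1)] T(1)
    by (auto intro!: derivative_eq_intros)
  ultimately obtain d where d: "0 < d" "\<And>h. 0 < h \<Longrightarrow> T - h \<in> {0..} \<Longrightarrow> h < d \<Longrightarrow> u j0 (T - h) < u j0 T"
    using has_real_derivative_pos_inc_left by blast
  define h where "h = min (d / 2) T"
  have "0 < h" "T - h \<in> {0..}" "h < d" using d(1) T(1) by (auto simp: h_def)
  then have "u j0 (T - h) < 0" using d(2) \<open>u j0 T \<le> 0\<close> by fastforce
  moreover have "0 < u j0 (T - h)" using below[OF _ _ j0(1)] \<open>0 < h\<close> \<open>T - h \<in> {0..}\<close> by simp
  ultimately show False by simp
qed

lemma lower_bound_preserved_if_active_deriv_nonneg: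
  fixes g g' :: "'i \<Rightarrow> real \<Rightarrow> real"
  assumes J: "finite J"
    and der: "\<And>j t. j \<in> J \<Longrightarrow> 0 \<le> t \<Longrightarrow> (g j has_real_derivative g' j t) (at t within {0..})"
    and active: "\<And>j t. j \<in> J \<Longrightarrow> 0 \<le> t \<Longrightarrow> 0 < g j t \<Longrightarrow> (\<forall>k\<in>J. g j t \<le> g k t) \<Longrightarrow> 0 \<le> g' j t"
    and c: "0 < c" and init: "\<And>j. j \<in> J \<Longrightarrow> c \<le> g j 0"
    and j: "j \<in> J" and t0: "0 \<le> t0"
  shows "c \<le> g j t0"
proof (rule field_le_epsilon)
  fix e :: real assume "0 < e"
  define \<delta> where "\<delta> = min e (c / 2)"
  have "0 < \<delta>" "\<delta> < c" "\<delta> \<le> e" using \<open>0 < e\<close> c by (auto simp: \<delta>_def)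
  then have \<epsilon>: "0 < \<delta> / (1 + t0)" "\<delta> / (1 + t0) * (1 + t0) < c" using t0 by simp_all
  have "c - \<delta> / (1 + t0) * (1 + t0) < g j t0"
    by (rule tilted_lower_bound[OF J der active init j t0 \<epsilon>])
  then have "c - \<delta> < g j t0" using t0 by simp
  then show "c \<le> g j t0 + e" using \<open>\<delta> \<le> e\<close> by simp
qed

lemma zero_if_abs_deriv_le:
  fixes d d' :: "real \<Rightarrow> real"
  assumes der: "\<And>t. 0 \<le> t \<Longrightarrow> t \<le> t0 \<Longrightarrow> (d has_real_derivative d' t) (at t within {0..})"
    and bound: "\<And>t. 0 \<le> t \<Longrightarrow> t \<le> t0 \<Longrightarrow> \<bar>d' t\<bar> \<le> K * \<bar>d t\<bar>"
    and d0: "d 0 = 0" and t: "0 \<le> t" "t \<le> t0"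
  shows "d t = 0"
proof -
  \<comment> \<open>Gronwall: the energy \<open>d\<^sup>2 e\<^sup>-\<^sup>2\<^sup>K\<^sup>s\<close> is nonincreasing and starts at 0.\<close>
  define e where "e s = (d s)\<^sup>2 * exp (- (2 * K) * s)" for s
  have "continuous_on {0..t} d"
    using der t
    by (intro DERIV_continuous_on[of "{0..t}" d d'] has_field_derivative_subset[OF der]) auto
  then have cont: "continuous_on {0..t} e" unfolding e_def by (intro continuous_intros)
  have "e t \<le> e 0"
  proof (rule DERIV_nonpos_imp_decreasing_open[OF t(1) _ cont])
    fix x assume x: "0 < x" "x < t"
    have "(d has_real_derivative d' x) (at x)"
      using der[of x] x t at_within_interior[of x "{0..}"] by simp
    then have "(e has_real_derivative
        exp (- (2 * K) * x) * (2 * (d x * d' x) - 2 * K * (d x)\<^sup>2)) (at x)"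
      unfolding e_def by (auto intro!: derivative_eq_intros simp: algebra_simps power2_eq_square)
    moreover have "d x * d' x \<le> K * (d x)\<^sup>2"
    proof -
      have "d x * d' x \<le> \<bar>d x\<bar> * \<bar>d' x\<bar>" by (metis abs_ge_self abs_mult)
      also have "\<dots> \<le> \<bar>d x\<bar> * (K * \<bar>d x\<bar>)" using bound[of x] x t by (intro mult_left_mono) auto
      also have "\<dots> = K * (d x)\<^sup>2" by (metis abs_mult_self_eq mult.left_commute power2_eq_square)
      finally show ?thesis .
    qed
    ultimately show "\<exists>y. (e has_real_derivative y) (at x) \<and> y \<le> 0"
      by (intro exI conjI) (auto intro: mult_nonneg_nonpos)
  qed
  then have "(d t)\<^sup>2 * exp (- (2 * K) * t) \<le> 0" by (simp add: e_def d0)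
  then show ?thesis by (simp add: mult_le_0_iff)
qed

definition drift :: "(real \<Rightarrow> real) \<Rightarrow> nat \<Rightarrow> (nat \<Rightarrow> real) \<Rightarrow> nat \<Rightarrow> real" where
  "drift \<theta> n x j = (\<Sum>k=1..n. \<theta> (min (x j) (x k)) * (x j - x k))"

lemma abs_weighted_diff_le:
  fixes \<theta> :: "real \<Rightarrow> real"
  assumes lip: "L-lipschitz_on (cball 0 R) \<theta>" and nonneg: "\<forall>s. 0 \<le> \<theta> s" and mono: "mono \<theta>"
    and x: "\<bar>x\<bar> \<le> R" and x': "\<bar>x'\<bar> \<le> R" and y: "\<bar>y\<bar> \<le> R"
  shows "\<bar>\<theta> (min x y) * (x - y) - \<theta> (min x' y) * (x' - y)\<bar> \<le> (2 * R * L + \<theta> R) * \<bar>x - x'\<bar>"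
proof -
  have "0 \<le> L" using lip lipschitz_on_nonneg by blast
  have "min x y \<in> cball 0 R" "min x' y \<in> cball 0 R" using x x' y by (auto simp: min_def)
  then have "\<bar>\<theta> (min x y) - \<theta> (min x' y)\<bar> \<le> L * \<bar>min x y - min x' y\<bar>"
    using lipschitz_onD[OF lip] by (simp add: dist_real_def)
  also have "\<dots> \<le> L * \<bar>x - x'\<bar>" using \<open>0 \<le> L\<close> by (intro mult_left_mono) (auto simp: min_def)
  finally have weight: "\<bar>\<theta> (min x y) - \<theta> (min x' y)\<bar> \<le> L * \<bar>x - x'\<bar>" .
  have "0 \<le> \<theta> (min x' y)" "\<theta> (min x' y) \<le> \<theta> R"
    using nonneg mono x' by (auto simp: mono_def)
  have split: "\<theta> (min x y) * (x - y) - \<theta> (min x' y) * (x' - y)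
      = (\<theta> (min x y) - \<theta> (min x' y)) * (x - y) + \<theta> (min x' y) * (x - x')"
    by (simp add: algebra_simps)
  have "\<bar>\<theta> (min x y) * (x - y) - \<theta> (min x' y) * (x' - y)\<bar>
      \<le> \<bar>\<theta> (min x y) - \<theta> (min x' y)\<bar> * \<bar>x - y\<bar> + \<theta> (min x' y) * \<bar>x - x'\<bar>"
    unfolding split using \<open>0 \<le> \<theta> (min x' y)\<close> by (metis abs_mult abs_of_nonneg abs_triangle_ineq)
  also have "\<dots> \<le> (L * \<bar>x - x'\<bar>) * (2 * R) + \<theta> R * \<bar>x - x'\<bar>"
  proof (intro add_mono mult_mono mult_right_mono)
    show "\<bar>x - y\<bar> \<le> 2 * R" using x y by linarith
  qed (use weight nonneg \<open>0 \<le> L\<close> \<open>\<theta> (min x' y) \<le> \<theta> R\<close> in auto)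
  also have "\<dots> = (2 * R * L + \<theta> R) * \<bar>x - x'\<bar>" by (simp add: algebra_simps)
  finally show ?thesis .
qed

lemma drift_diff_le:
  fixes \<theta> :: "real \<Rightarrow> real"
  assumes lip: "L-lipschitz_on (cball 0 R) \<theta>" and nonneg: "\<forall>s. 0 \<le> \<theta> s" and mono: "mono \<theta>"
    and bound: "\<forall>k\<in>{1..n}. \<bar>x k\<bar> \<le> R" and i: "i \<in> {1..n}" and l: "l \<in> {1..n}"
  shows "\<bar>drift \<theta> n x i - drift \<theta> n x l\<bar> \<le> real n * (2 * R * L + \<theta> R) * \<bar>x i - x l\<bar>"
proof -
  have "\<bar>drift \<theta> n x i - drift \<theta> n x l\<bar>
      = \<bar>\<Sum>k=1..n. \<theta> (min (x i) (x k)) * (x i - x k) - \<theta> (min (x l) (x k)) * (x l - x k)\<bar>"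
    by (simp add: drift_def sum_subtractf)
  also have "\<dots> \<le> (\<Sum>k=1..n. \<bar>\<theta> (min (x i) (x k)) * (x i - x k) - \<theta> (min (x l) (x k)) * (x l - x k)\<bar>)"
    by (rule sum_abs)
  also have "\<dots> \<le> (\<Sum>k=1..n. (2 * R * L + \<theta> R) * \<bar>x i - x l\<bar>)"
    using bound i l by (intro sum_mono abs_weighted_diff_le[OF lip nonneg mono]) auto
  also have "\<dots> = real n * (2 * R * L + \<theta> R) * \<bar>x i - x l\<bar>" by simp
  finally show ?thesis .
qed

lemma drift_le_drift:
  fixes \<theta> :: "real \<Rightarrow> real"
  assumes nonneg: "\<forall>s. 0 \<le> \<theta> s" and ji: "x j \<le> x i"
    and others: "\<forall>k\<in>{1..n}. x k = x i \<or> x k \<le> x j"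
  shows "drift \<theta> n x j \<le> drift \<theta> n x i"
  unfolding drift_def
proof (rule sum_mono)
  fix k assume "k \<in> {1..n}"
  then consider "x k = x i" | "x k \<le> x j" using others by blast
  then show "\<theta> (min (x j) (x k)) * (x j - x k) \<le> \<theta> (min (x i) (x k)) * (x i - x k)"
  proof cases
    case 1
    then show ?thesis using nonneg ji by (simp add: mult_nonneg_nonpos)
  next
    case 2
    then have "min (x j) (x k) = x k" "min (x i) (x k) = x k" using ji by auto
    then show ?thesis using nonneg ji by (simp add: mult_left_mono)
  qed
qed

locale drift_flow =
  fixes n :: nat and \<kappa> :: real and \<theta> :: "real \<Rightarrow> real" and \<rho> :: "real \<Rightarrow> nat \<Rightarrow> real"
  assumes ode: "\<And>j t. j \<in> {1..n} \<Longrightarrow> 0 \<le> t \<Longrightarrow>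
      ((\<lambda>s. \<rho> s j) has_real_derivative \<kappa> * drift \<theta> n (\<rho> t) j) (at t within {0..})"
    and theta_nonneg: "\<forall>s. 0 \<le> \<theta> s"
    and theta_mono: "mono \<theta>"
begin

lemma continuous_on_coordinate: "j \<in> {1..n} \<Longrightarrow> continuous_on {0..} (\<lambda>s. \<rho> s j)"
  using ode by (intro DERIV_continuous_on) auto

lemma coordinates_remain_equal:
  assumes loc: "\<forall>x. \<exists>\<delta>>0. \<exists>L. L-lipschitz_on (cball x \<delta>) \<theta>"
    and i: "i \<in> {1..n}" and l: "l \<in> {1..n}" and eq0: "\<rho> 0 i = \<rho> 0 l" and t0: "0 \<le> t0"
  shows "\<rho> t0 i = \<rho> t0 l"
proof -
  have "continuous_on {0..t0} (\<lambda>s. \<rho> s k)" if "k \<in> {1..n}" for k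
    using continuous_on_coordinate[OF that] by (rule continuous_on_subset) auto
  then obtain R where R: "\<And>k s. k \<in> {1..n} \<Longrightarrow> s \<in> {0..t0} \<Longrightarrow> \<bar>\<rho> s k\<bar> \<le> R"
    using continuous_family_bounded[where f = "\<lambda>k s. \<rho> s k", OF finite_atLeastAtMost compact_Icc]
    by blast
  obtain L where L: "L-lipschitz_on (cball 0 R) \<theta>"
    using lipschitz_on_compact_if_locally_lipschitz[OF loc compact_cball] by blast
  have "\<rho> t0 i - \<rho> t0 l = 0"
  proof (rule zero_if_abs_deriv_le[where d = "\<lambda>s. \<rho> s i - \<rho> s l" and t0 = t0
        and d' = "\<lambda>t. \<kappa> * drift \<theta> n (\<rho> t) i - \<kappa> * drift \<theta> n (\<rho> t) l"
        and K = "\<bar>\<kappa>\<bar> * (real n * (2 * R * L + \<theta> R))"])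
    show "((\<lambda>s. \<rho> s i - \<rho> s l) has_real_derivative \<kappa> * drift \<theta> n (\<rho> t) i - \<kappa> * drift \<theta> n (\<rho> t) l)
        (at t within {0..})" if "0 \<le> t" "t \<le> t0" for t
      using i l that by (intro DERIV_diff ode)
    show "\<bar>\<kappa> * drift \<theta> n (\<rho> t) i - \<kappa> * drift \<theta> n (\<rho> t) l\<bar>
        \<le> \<bar>\<kappa>\<bar> * (real n * (2 * R * L + \<theta> R)) * \<bar>\<rho> t i - \<rho> t l\<bar>" if "0 \<le> t" "t \<le> t0" for t
    proof -
      have "\<bar>drift \<theta> n (\<rho> t) i - drift \<theta> n (\<rho> t) l\<bar> \<le> real n * (2 * R * L + \<theta> R) * \<bar>\<rho> t i - \<rho> t l\<bar>"
        using R that i l by (intro drift_diff_le[OF L theta_nonneg theta_mono]) auto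
      then show ?thesis
        by (simp add: abs_mult mult.assoc flip: right_diff_distrib) (intro mult_left_mono; simp)
    qed
  qed (use eq0 t0 in auto)
  then show ?thesis by simp
qed

lemma lower_group_gap_nondecreasing:
  assumes \<kappa>: "0 \<le> \<kappa>" and "m < n"
    and block: "\<And>t i. 0 \<le> t \<Longrightarrow> i \<in> {1..m} \<Longrightarrow> \<rho> t i = \<rho> t 1"
    and gap0: "Max ((\<lambda>j. \<rho> 0 j) ` {m<..n}) < \<rho> 0 1" and t0: "0 \<le> t0"
  shows "\<rho> 0 1 - Max ((\<lambda>j. \<rho> 0 j) ` {m<..n}) \<le> \<rho> t0 1 - Max ((\<lambda>j. \<rho> t0 j) ` {m<..n})"
proof -
  define c where "c = \<rho> 0 1 - Max ((\<lambda>j. \<rho> 0 j) ` {m<..n})"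
  have lower: "finite {m<..n}" "{m<..n} \<noteq> {}" using \<open>m < n\<close> by auto
  have "c \<le> \<rho> t0 1 - \<rho> t0 j" if j: "j \<in> {m<..n}" for j
  proof (rule lower_bound_preserved_if_active_deriv_nonneg[where g = "\<lambda>j t. \<rho> t 1 - \<rho> t j"
        and g' = "\<lambda>j t. \<kappa> * drift \<theta> n (\<rho> t) 1 - \<kappa> * drift \<theta> n (\<rho> t) j", OF lower(1) _ _ _ _ j t0])
    show "((\<lambda>t. \<rho> t 1 - \<rho> t k) has_real_derivative \<kappa> * drift \<theta> n (\<rho> t) 1 - \<kappa> * drift \<theta> n (\<rho> t) k)
        (at t within {0..})" if "k \<in> {m<..n}" "0 \<le> t" for k t
      using that \<open>m < n\<close> by (intro DERIV_diff ode) auto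
    show "0 \<le> \<kappa> * drift \<theta> n (\<rho> t) 1 - \<kappa> * drift \<theta> n (\<rho> t) k"
      if k: "k \<in> {m<..n}" and t: "0 \<le> t" and pos: "0 < \<rho> t 1 - \<rho> t k"
        and active: "\<forall>l\<in>{m<..n}. \<rho> t 1 - \<rho> t k \<le> \<rho> t 1 - \<rho> t l" for k t
    proof -
      have "\<forall>l\<in>{1..n}. \<rho> t l = \<rho> t 1 \<or> \<rho> t l \<le> \<rho> t k"
        using block[OF t] active by fastforce
      then have "drift \<theta> n (\<rho> t) k \<le> drift \<theta> n (\<rho> t) 1"
        using pos by (intro drift_le_drift[OF theta_nonneg]) auto
      then show ?thesis using \<kappa> by (simp add: mult_left_mono flip: right_diff_distrib)
    qed
    show "0 < c" using gap0 by (simp add: c_def)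
    show "c \<le> \<rho> 0 1 - \<rho> 0 k" if "k \<in> {m<..n}" for k
      unfolding c_def using lower that by simp
  qed
  then have "Max ((\<lambda>j. \<rho> t0 j) ` {m<..n}) \<le> \<rho> t0 1 - c"
    using lower by (subst Max_le_iff) fastforce+
  then show ?thesis by (simp add: c_def)
qed

end

theorem mainTheorem3:
  fixes n m :: nat and \<kappa> :: real
    and \<theta>t :: "real \<Rightarrow> real"
    and \<rho> :: "real \<Rightarrow> nat \<Rightarrow> real"
  assumes n2: "n \<ge> 2"
    and kpos: "\<kappa> > 0"
    and loclip: "\<forall>x. \<exists>\<delta>>0. \<exists>L. L-lipschitz_on (cball x \<delta>) \<theta>t"
    and nonneg: "\<forall>s. \<theta>t s \<ge> 0"
    and mono: "mono \<theta>t"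
    and zero: "\<forall>s\<le>0. \<theta>t s = 0"
    and pos: "\<forall>s>0. \<theta>t s > 0"
    and m: "1 \<le> m" "m < n"
    and ode: "\<forall>j\<in>{1..n}. \<forall>t\<ge>0.
       ((\<lambda>s. \<rho> s j) has_real_derivative
          \<kappa> * (\<Sum>k=1..n. \<theta>t (min (\<rho> t j) (\<rho> t k)) * (\<rho> t j - \<rho> t k)))
       (at t within {0..})"
    and simplex: "(\<forall>j\<in>{1..n}. \<rho> 0 j \<ge> 0) \<and> (\<Sum>j=1..n. \<rho> 0 j) = 1"
    and init_eq: "\<forall>j\<in>{1..m}. \<rho> 0 j = \<rho> 0 1"
    and init_gap: "\<rho> 0 1 > \<rho> 0 (m+1)"
    and init_ord: "\<forall>j. m < j \<and> j < n \<longrightarrow> \<rho> 0 j \<ge> \<rho> 0 (j+1)"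
  shows "\<forall>t\<ge>0. (\<forall>j\<in>{1..m}. \<rho> t j = \<rho> t 1) \<and>
     \<rho> t 1 - Max ((\<lambda>j. \<rho> t j) ` {m<..n}) \<ge> \<rho> 0 1 - Max ((\<lambda>j. \<rho> 0 j) ` {m<..n})"
proof -
  interpret drift_flow n \<kappa> \<theta>t \<rho>
  proof
    show "((\<lambda>s. \<rho> s j) has_real_derivative \<kappa> * drift \<theta>t n (\<rho> t) j) (at t within {0..})"
      if "j \<in> {1..n}" "0 \<le> t" for j t
      using ode that unfolding drift_def by blast
  qed (use nonneg mono in auto)
  have block: "\<rho> t i = \<rho> t 1" if "0 \<le> t" "i \<in> {1..m}" for t i
  proof (rule coordinates_remain_equal[OF loclip _ _ _ that(1)])
    show "i \<in> {1..n}" "1 \<in> {1..n}" using that(2) m by auto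
    show "\<rho> 0 i = \<rho> 0 1" using init_eq that(2) by blast
  qed
  have "Max ((\<lambda>j. \<rho> 0 j) ` {m<..n}) < \<rho> 0 1"
    using m descending_le_first[OF init_ord] init_gap by (subst Max_less_iff) force+
  then show ?thesis
    using block lower_group_gap_nondecreasing[OF less_imp_le[OF kpos] \<open>m < n\<close> block] by blast
qed

end
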